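(* The geometric standard strongly integral super-packing is invariant under the translations $(x,y)\mapsto(x+2,y)$ and $(x,y)\mapsto(x,y+2)$ and under the reflections $(x,y)\mapsto(-x,y)$ and $(x,y)\mapsto(x,-y)$. The crystallographic group generated by these four motions is the complete group of Euclidean motions of the plane leaving the geometric standard strongly integral super-packing invariant.
   Context: Circles are taken in $\hat{\mathbb C}=\mathbb R^2\cup\{\infty\}$; lines count as circles. A Descartes configuration is a set of four mutually tangent circles with disjoint interiors; an ordered, oriented one carries an ordering and total orientation, with signed curvatures (reciprocal radius, negative if the interior is unbounded, $0$ for lines). Its augmented curvature-center coordinate matrix $W_{\mathcal D}$ has $i$-th row $(\bar b_i,b_i,b_ix_i,b_iy_i)$ with $(x_i,y_i)$ the center and $\bar b_i=b_i(x_i^2+y_i^2)-1/b_i$ (for a line: $(2p\cdot n,0,n_x,n_y)$, $n$ the unit normal pointing into the interior half-plane, $p$ a point of the line); it determines $\mathcal D$. Let $S_i$ be the $4\times4$ integer matrix equal to the identity except that row $i$ has $-1$ in position $i$ and $2$ elsewhere, $S_i^\perp=S_i^T$, and $\mathcal A^S=\langle S_i,S_i^\perp\rangle$ the super-Apollonian group, acting by $W_{U[\mathcal D]}=UW_{\mathcal D}$. The geometric super-packing generated by $\mathcal D$ is the set of all circles of configurations in $\mathcal A^S[\mathcal D]$. The standard strongly integral super-packing is the one generated by the configuration $\mathcal D_1$ with $W_{\mathcal D_1}=\begin{pmatrix}2&0&0&1\\2&0&0&-1\\0&1&1&0\\0&1&-1&0\end{pmatrix}$, i.e. the lines $y=1$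 and $y=-1$ and the circles of radius $1$ centered at $(1,0)$ and $(-1,0)$. *)

theory Defs
  imports "HOL-Analysis.Analysis" "HOL-Library.Numeral_Type"
begin

text \<open>4x4 real matrices indexed by the 4-element type 4. A row (bbar, b, b*x, b*y)
  of an augmented curvature-center coordinate matrix is accessed as
  v$1, v$2, v$3, v$4 (the four distinct elements of type 4).\<close>

definition S_gen :: "4 \<Rightarrow> real^4^4" where
  "S_gen i = (\<chi> r c. if r = i then (if c = i then -1 else 2) else (if r = c then 1 else 0))"

definition S_gen_perp :: "4 \<Rightarrow> real^4^4" where
  "S_gen_perp i = transpose (S_gen i)"

text \<open>The super-Apollonian group: the group generated by the S_i and S_i^perp
  (all generators are involutions, so closure under left multiplication by
  generators and their inverses from the identity gives the generated group).\<close>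
inductive_set super_apollonian_group :: "(real^4^4) set" where
  id: "mat 1 \<in> super_apollonian_group"
| S: "U \<in> super_apollonian_group \<Longrightarrow> S_gen i ** U \<in> super_apollonian_group"
| Sp: "U \<in> super_apollonian_group \<Longrightarrow> S_gen_perp i ** U \<in> super_apollonian_group"
| Sinv: "U \<in> super_apollonian_group \<Longrightarrow> matrix_inv (S_gen i) ** U \<in> super_apollonian_group"
| Spinv: "U \<in> super_apollonian_group \<Longrightarrow> matrix_inv (S_gen_perp i) ** U \<in> super_apollonian_group"

definition mkrow :: "real \<Rightarrow> real \<Rightarrow> real \<Rightarrow> real \<Rightarrow> real^4" where
  "mkrow a b c d = (\<chi> j. if j = 1 then a else if j = 2 then b else if j = 3 then c else d)"

text \<open>W_{D_1}: lines y=1, y=-1, unit circles centred at (1,0), (-1,0).\<close>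
definition W_D1 :: "real^4^4" where
  "W_D1 = (\<chi> i. if i = 1 then mkrow 2 0 0 1
               else if i = 2 then mkrow 2 0 0 (-1)
               else if i = 3 then mkrow 0 1 1 0
               else mkrow 0 1 (-1) 0)"

text \<open>Geometric (unoriented) circle, as a point set in R^2 (the point at infinity
  of a line is omitted), determined by a row (bbar, b, b x, b y).\<close>
definition circle_of_row :: "real^4 \<Rightarrow> (real^2) set" where
  "circle_of_row v =
     (if v$2 \<noteq> 0 then sphere (\<chi> k. if k = 1 then v$3 / v$2 else v$4 / v$2) (1 / \<bar>v$2\<bar>)
      else {p. p$1 * v$3 + p$2 * v$4 = v$1 / 2})"

definition geometric_super_packing :: "real^4^4 \<Rightarrow> (real^2) set set" where
  "geometric_super_packing W =
     {circle_of_row ((U ** W) $ i) | U i. U \<in> super_apollonian_group}"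

definition standard_super_packing :: "(real^2) set set" where
  "standard_super_packing = geometric_super_packing W_D1"

definition pt :: "real \<Rightarrow> real \<Rightarrow> real^2" where
  "pt x y = (\<chi> k. if k = 1 then x else y)"

definition transl_x :: "real^2 \<Rightarrow> real^2" where "transl_x p = pt (p$1 + 2) (p$2)"
definition transl_y :: "real^2 \<Rightarrow> real^2" where "transl_y p = pt (p$1) (p$2 + 2)"
definition refl_x :: "real^2 \<Rightarrow> real^2" where "refl_x p = pt (- p$1) (p$2)"
definition refl_y :: "real^2 \<Rightarrow> real^2" where "refl_y p = pt (p$1) (- p$2)"

definition motion_gens :: "(real^2 \<Rightarrow> real^2) set" where
  "motion_gens = {transl_x, transl_y, refl_x, refl_y}"

inductive_set motion_group :: "(real^2 \<Rightarrow> real^2) set" where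
  id: "id \<in> motion_group"
| gen: "f \<in> motion_group \<Longrightarrow> g \<in> motion_gens \<Longrightarrow> g \<circ> f \<in> motion_group"
| geninv: "f \<in> motion_group \<Longrightarrow> g \<in> motion_gens \<Longrightarrow> inv g \<circ> f \<in> motion_group"

text \<open>Euclidean motion of the plane: a distance-preserving map (automatically bijective).\<close>
definition euclidean_motion :: "(real^2 \<Rightarrow> real^2) \<Rightarrow> bool" where
  "euclidean_motion f \<longleftrightarrow> (\<forall>p q. dist (f p) (f q) = dist p q)"

definition leaves_invariant :: "(real^2 \<Rightarrow> real^2) \<Rightarrow> (real^2) set set \<Rightarrow> bool" where
  "leaves_invariant f P \<longleftrightarrow> (\<lambda>C. f ` C) ` P = P"

end

theory Submission
  imports Defs
begin

text \<open>Each of the four motions maps the circle with augmented curvature-center coordinates v to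
  the circle with coordinates v G for an explicit matrix G, and W_D1 G = P V W_D1 with P a
  permutation matrix and V one of I, S_4, S_1^perp. Conjugation by P permutes the generators of
  the super-Apollonian group, so the motions permute the circles of the super-packing.

  Conversely, every element of the super-Apollonian group is an integral matrix congruent to I
  mod 2 that preserves the Descartes form. Hence every circle of the packing has integral
  coordinates with the parities of a row of W_D1: its lines are horizontal and its circles have
  radius at most 1. An invariant motion therefore maps the line y = 1 to a horizontal line, so it
  is (x, y) \<mapsto> (\<plusminus>x + t1, \<plusminus>y + t2); it maps the unit circle about (1, 0) to a unit circle of
  the packing, whose center has odd x and even y coordinate, and this forces t1, t2 to be even.\<close>

section \<open>The super-Apollonian group\<close>

lemma matrix_add_rdistrib: "((A::'a::semiring_1^'n^'m) + B) ** C = A ** C + B ** C"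
  by (vector matrix_matrix_mult_def sum.distrib[symmetric] field_simps)

lemma matrix_inv_involution:
  fixes A :: "'a::semiring_1^'n^'n"
  assumes "A ** A = mat 1"
  shows "matrix_inv A = A"
  unfolding matrix_inv_def
proof (rule some_equality)
  fix B assume "A ** B = mat 1 \<and> B ** A = mat 1"
  then show "B = A"
    using assms by (metis matrix_mul_assoc matrix_mul_rid)
qed (use assms in simp)

lemma S_gen_involution: "S_gen i ** S_gen i = mat 1"
  using exhaust_4[of i]
  by (auto simp: S_gen_def matrix_matrix_mult_def mat_def vec_eq_iff sum_4 forall_4)

lemma S_gen_perp_involution: "S_gen_perp i ** S_gen_perp i = mat 1"
  unfolding S_gen_perp_def by (metis S_gen_involution matrix_transpose_mul transpose_mat)

lemma matrix_inv_S_gen [simp]: "matrix_inv (S_gen i) = S_gen i"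
  by (rule matrix_inv_involution[OF S_gen_involution])

lemma matrix_inv_S_gen_perp [simp]: "matrix_inv (S_gen_perp i) = S_gen_perp i"
  by (rule matrix_inv_involution[OF S_gen_perp_involution])

lemma super_apollonian_group_induct [consumes 1, case_names id S Sp]:
  assumes "U \<in> super_apollonian_group" and "P (mat 1)"
    and "\<And>U i. U \<in> super_apollonian_group \<Longrightarrow> P U \<Longrightarrow> P (S_gen i ** U)"
    and "\<And>U i. U \<in> super_apollonian_group \<Longrightarrow> P U \<Longrightarrow> P (S_gen_perp i ** U)"
  shows "P U"
  using assms(1) by induct (auto intro: assms(2-4))

lemma super_apollonian_group_mult:
  assumes "U \<in> super_apollonian_group" and "V \<in> super_apollonian_group"
  shows "U ** V \<in> super_apollonian_group"
  using assms(1)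
proof (induct rule: super_apollonian_group_induct)
  case (S U i)
  then show ?case by (metis matrix_mul_assoc super_apollonian_group.S)
next
  case (Sp U i)
  then show ?case by (metis matrix_mul_assoc super_apollonian_group.Sp)
qed (simp add: assms(2))

lemma S_gen_in_super_apollonian_group: "S_gen i \<in> super_apollonian_group"
  using super_apollonian_group.S[OF super_apollonian_group.id] by simp

lemma S_gen_perp_in_super_apollonian_group: "S_gen_perp i \<in> super_apollonian_group"
  using super_apollonian_group.Sp[OF super_apollonian_group.id] by simp

definition permute_matrix :: "('n \<Rightarrow> 'n) \<Rightarrow> 'a^'n^'n \<Rightarrow> 'a^'n^'n" where
  "permute_matrix p U = (\<chi> r c. U$(p r)$(p c))"

definition perm_matrix :: "('n \<Rightarrow> 'n) \<Rightarrow> 'a::{zero,one}^'n^'n" where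
  "perm_matrix p = (\<chi> r c. if c = p r then 1 else 0)"

lemma permute_matrix_mult:
  fixes A B :: "'a::semiring_1^'n^'n"
  assumes "\<And>x. p (p x) = x"
  shows "permute_matrix p (A ** B) = permute_matrix p A ** permute_matrix p B"
proof -
  have "(\<Sum>k\<in>UNIV. A$p r$k * B$k$p c) = (\<Sum>k\<in>UNIV. A$p r$p k * B$p k$p c)" for r c
    by (rule sum.reindex_bij_witness[where i=p and j=p]) (auto simp: assms)
  then show ?thesis
    by (simp add: permute_matrix_def matrix_matrix_mult_def vec_eq_iff)
qed

lemma permute_matrix_involution:
  assumes "\<And>x. p (p x) = x"
  shows "permute_matrix p (permute_matrix p U) = U"
  by (simp add: permute_matrix_def assms vec_eq_iff)

lemma permute_matrix_mat1:
  assumes "\<And>x. p (p x) = x"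
  shows "permute_matrix p (mat 1) = mat 1"
  unfolding permute_matrix_def mat_def vec_eq_iff by (auto, metis assms)

lemma permute_S_gen:
  assumes "\<And>x. p (p x) = x"
  shows "permute_matrix p (S_gen i) = S_gen (p i)"
  unfolding permute_matrix_def S_gen_def vec_eq_iff by (auto, (metis assms)+)

lemma permute_S_gen_perp:
  assumes "\<And>x. p (p x) = x"
  shows "permute_matrix p (S_gen_perp i) = S_gen_perp (p i)"
  unfolding permute_matrix_def S_gen_perp_def S_gen_def transpose_def vec_eq_iff
  by (auto, (metis assms)+)

lemma super_apollonian_group_permute:
  assumes "\<And>x. p (p x) = x" and "U \<in> super_apollonian_group"
  shows "permute_matrix p U \<in> super_apollonian_group"
  using assms(2)
  by (induct rule: super_apollonian_group_induct)
    (simp_all add: assms(1) permute_matrix_mat1 permute_matrix_mult permute_S_gen permute_S_gen_perp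
      super_apollonian_group.id super_apollonian_group.S super_apollonian_group.Sp)

lemma perm_matrix_row:
  fixes X :: "'a::semiring_1^'m^'n"
  shows "(perm_matrix p ** X) $ i = X $ p i"
proof -
  have "(\<Sum>k\<in>UNIV. (if k = p i then 1 else 0) * X$k$c) = (\<Sum>k\<in>UNIV. if k = p i then X$k$c else 0)" for c
    by (rule sum.cong) auto
  then show ?thesis
    by (simp add: perm_matrix_def matrix_matrix_mult_def vec_eq_iff)
qed

lemma matrix_mul_perm_matrix:
  fixes U :: "'a::semiring_1^'n^'n"
  assumes "\<And>x. p (p x) = x"
  shows "U ** perm_matrix p = perm_matrix p ** permute_matrix p U"
proof -
  have "(\<Sum>k\<in>UNIV. U$r$k * (if c = p k then 1 else 0)) = (\<Sum>k\<in>UNIV. if k = p c then U$r$k else 0)" for r c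
  proof (rule sum.cong)
    fix k
    have "c = p k \<longleftrightarrow> k = p c" using assms by metis
    then show "U$r$k * (if c = p k then 1 else 0) = (if k = p c then U$r$k else 0)" by simp
  qed simp
  then have "(U ** perm_matrix p)$r$c = U$r$p c" for r c
    by (simp add: matrix_matrix_mult_def perm_matrix_def)
  then show ?thesis
    by (simp add: vec_eq_iff perm_matrix_row permute_matrix_def assms)
qed

section \<open>Integrality, parity and the Descartes form\<close>

definition integral_matrix :: "'a::ring_1^'n^'m \<Rightarrow> bool" where
  "integral_matrix A \<longleftrightarrow> (\<forall>i j. A$i$j \<in> \<int>)"

lemma integral_matrix_mult:
  "integral_matrix A \<Longrightarrow> integral_matrix B \<Longrightarrow> integral_matrix (A ** B)"
  unfolding integral_matrix_def matrix_matrix_mult_def by (auto intro!: Ints_sum Ints_mult)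

lemma integral_matrix_add:
  "integral_matrix A \<Longrightarrow> integral_matrix B \<Longrightarrow> integral_matrix (A + B)"
  unfolding integral_matrix_def by auto

definition congruent_mat1_mod2 :: "real^'n^'n \<Rightarrow> bool" where
  "congruent_mat1_mod2 U \<longleftrightarrow> (\<exists>E. integral_matrix E \<and> U = mat 1 + 2 *\<^sub>R E)"

lemma congruent_mat1_mod2_integral:
  "congruent_mat1_mod2 U \<Longrightarrow> integral_matrix U"
  unfolding congruent_mat1_mod2_def integral_matrix_def by (auto simp: mat_def)

lemma congruent_mat1_mod2_mult:
  assumes "congruent_mat1_mod2 A" and "congruent_mat1_mod2 U"
  shows "congruent_mat1_mod2 (A ** U)"
proof -
  obtain D E where D: "integral_matrix D" "A = mat 1 + 2 *\<^sub>R D"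
    and E: "integral_matrix E" "U = mat 1 + 2 *\<^sub>R E"
    using assms unfolding congruent_mat1_mod2_def by blast
  have "A ** U = mat 1 + 2 *\<^sub>R (E + D ** U)"
    by (simp add: D(2) matrix_add_rdistrib E(2) scalar_matrix_assoc[symmetric] scaleR_add_right)
  moreover have "integral_matrix (E + D ** U)"
    using D E assms(2) by (simp add: integral_matrix_add integral_matrix_mult congruent_mat1_mod2_integral)
  ultimately show ?thesis
    unfolding congruent_mat1_mod2_def by blast
qed

lemma congruent_mat1_mod2_S_gen: "congruent_mat1_mod2 (S_gen i)"
  unfolding congruent_mat1_mod2_def
proof (intro exI conjI)
  show "S_gen i = mat 1 + 2 *\<^sub>R ((1/2) *\<^sub>R (S_gen i - mat 1))"
    by simp
  show "integral_matrix ((1/2) *\<^sub>R (S_gen i - mat 1))"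
    by (auto simp: integral_matrix_def S_gen_def mat_def)
qed

lemma congruent_mat1_mod2_S_gen_perp: "congruent_mat1_mod2 (S_gen_perp i)"
  unfolding congruent_mat1_mod2_def
proof (intro exI conjI)
  show "S_gen_perp i = mat 1 + 2 *\<^sub>R ((1/2) *\<^sub>R (S_gen_perp i - mat 1))"
    by simp
  show "integral_matrix ((1/2) *\<^sub>R (S_gen_perp i - mat 1))"
    by (auto simp: integral_matrix_def S_gen_perp_def S_gen_def transpose_def mat_def)
qed

lemma super_apollonian_group_congruent_mat1_mod2:
  "U \<in> super_apollonian_group \<Longrightarrow> congruent_mat1_mod2 U"
proof (induct rule: super_apollonian_group_induct)
  case id
  show ?case
    unfolding congruent_mat1_mod2_def integral_matrix_def by (intro exI[of _ 0]) simp
qed (simp_all add: congruent_mat1_mod2_mult congruent_mat1_mod2_S_gen congruent_mat1_mod2_S_gen_perp)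

lemma mkrow_nth [simp]:
  "mkrow a b c d $ 1 = a" "mkrow a b c d $ 2 = b" "mkrow a b c d $ 3 = c" "mkrow a b c d $ 4 = d"
  by (simp_all add: mkrow_def)

lemma integral_matrix_W_D1: "integral_matrix W_D1"
  by (auto simp: integral_matrix_def W_D1_def mkrow_def)

definition standard_rows :: "(real^4) set" where
  "standard_rows = {(U ** W_D1) $ i | U i. U \<in> super_apollonian_group}"

lemma standard_super_packing_eq: "standard_super_packing = circle_of_row ` standard_rows"
  unfolding standard_super_packing_def geometric_super_packing_def standard_rows_def by blast

lemma standard_row_congruent:
  assumes "v \<in> standard_rows"
  obtains i w where "\<And>j. w$j \<in> \<int>" and "v = W_D1 $ i + 2 *\<^sub>R w"
proof -
  obtain U i where U: "U \<in> super_apollonian_group" and v: "v = (U ** W_D1) $ i"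
    using assms unfolding standard_rows_def by blast
  obtain E where E: "integral_matrix E" "U = mat 1 + 2 *\<^sub>R E"
    using super_apollonian_group_congruent_mat1_mod2[OF U] unfolding congruent_mat1_mod2_def by blast
  have "(E ** W_D1) $ i $ j \<in> \<int>" for j
    using E(1) integral_matrix_W_D1 integral_matrix_mult unfolding integral_matrix_def by blast
  moreover have "v = W_D1 $ i + 2 *\<^sub>R (E ** W_D1) $ i"
    by (simp add: v E(2) matrix_add_rdistrib scalar_matrix_assoc[symmetric])
  ultimately show thesis
    by (rule that)
qed

lemma standard_row_integral: "v \<in> standard_rows \<Longrightarrow> v$j \<in> \<int>"
  using integral_matrix_W_D1 by (elim standard_row_congruent) (auto simp: integral_matrix_def)

lemma standard_row_parity:
  assumes "v \<in> standard_rows"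
  shows "(v$2/2 \<in> \<int> \<and> v$3/2 \<in> \<int>) \<or> ((v$2 - 1)/2 \<in> \<int> \<and> (v$3 - 1)/2 \<in> \<int> \<and> v$4/2 \<in> \<int>)"
proof -
  obtain i w where w: "\<And>j. w$j \<in> \<int>" and v: "v = W_D1 $ i + 2 *\<^sub>R w"
    using standard_row_congruent[OF assms] by blast
  have vj: "v$j = W_D1$i$j + 2 * w$j" for j
    by (simp add: v)
  consider "W_D1$i$2 = 0" "W_D1$i$3 = 0"
    | "W_D1$i$2 = 1" "W_D1$i$3 = 1" "W_D1$i$4 = 0"
    | "W_D1$i$2 = 1" "W_D1$i$3 = -1" "W_D1$i$4 = 0"
    using exhaust_4[of i] by (auto simp: W_D1_def)
  then show ?thesis
  proof cases
    case 1
    then show ?thesis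
      using w by (simp add: vj)
  next
    case 2
    then show ?thesis
      using w by (simp add: vj)
  next
    case 3
    then have "(v$2 - 1)/2 = w$2" "(v$3 - 1)/2 = w$3 - 1" "v$4/2 = w$4"
      by (simp_all add: vj)
    then have "(v$2 - 1)/2 \<in> \<int> \<and> (v$3 - 1)/2 \<in> \<int> \<and> v$4/2 \<in> \<int>"
      using w by (simp only:) (blast intro: Ints_diff Ints_1)
    then show ?thesis ..
  qed
qed

lemma not_half_Ints_both:
  fixes x :: real
  assumes "x/2 \<in> \<int>" and "(x - 1)/2 \<in> \<int>"
  shows False
proof -
  have "x/2 - (x - 1)/2 \<in> \<int>"
    using assms by (rule Ints_diff)
  then obtain k where "1/2 = (of_int k :: real)"
    by (auto simp: diff_divide_distrib[symmetric] elim: Ints_cases)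
  then have "of_int (2 * k) = (1::real)"
    by simp
  then have "2 * k = 1"
    by linarith
  then show False
    by presburger
qed

text \<open>With Q_D = I - 1/2 1 1^T and Q_W = [[0,-4,0,0],[-4,0,0,0],[0,0,2,0],[0,0,0,2]], the augmented
  Euclidean Descartes theorem W^T Q_D W = Q_W is equivalent to W Q_W^-1 W^T = Q_D^-1 = Q_D.
  Below, descartes_form is 2 Q_D and curvature_center_form is 2 Q_W^-1.\<close>

definition descartes_form :: "real^4^4" where
  "descartes_form = (\<chi> r c. if r = c then 1 else -1)"

definition curvature_center_form :: "real^4^4" where
  "curvature_center_form =
     (\<chi> i. if i = 1 then mkrow 0 (-1/2) 0 0 else if i = 2 then mkrow (-1/2) 0 0 0
           else if i = 3 then mkrow 0 0 1 0 else mkrow 0 0 0 1)"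

lemma S_gen_preserves_descartes_form:
  "S_gen i ** descartes_form ** transpose (S_gen i) = descartes_form"
  using exhaust_4[of i]
  by (auto simp: S_gen_def descartes_form_def matrix_matrix_mult_def transpose_def vec_eq_iff sum_4 forall_4)

lemma S_gen_perp_preserves_descartes_form:
  "S_gen_perp i ** descartes_form ** transpose (S_gen_perp i) = descartes_form"
  using exhaust_4[of i]
  by (auto simp: S_gen_perp_def S_gen_def descartes_form_def matrix_matrix_mult_def transpose_def
      vec_eq_iff sum_4 forall_4)

lemma super_apollonian_group_preserves_descartes_form:
  "U \<in> super_apollonian_group \<Longrightarrow> U ** descartes_form ** transpose U = descartes_form"
proof (induct rule: super_apollonian_group_induct)
  case (S U i)
  then show ?case
    using S_gen_preserves_descartes_form
    by (metis matrix_mul_assoc matrix_transpose_mul)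
next
  case (Sp U i)
  then show ?case
    using S_gen_perp_preserves_descartes_form
    by (metis matrix_mul_assoc matrix_transpose_mul)
qed simp

lemma augmented_descartes_W_D1:
  "W_D1 ** curvature_center_form ** transpose W_D1 = descartes_form"
  by (auto simp: W_D1_def curvature_center_form_def descartes_form_def matrix_matrix_mult_def
      transpose_def vec_eq_iff sum_4 forall_4)

lemma curvature_center_form_diagonal:
  "(X ** curvature_center_form ** transpose X) $ i $ i = (X$i$3)\<^sup>2 + (X$i$4)\<^sup>2 - X$i$1 * X$i$2"
  by (simp add: curvature_center_form_def matrix_matrix_mult_def transpose_def sum_4 power2_eq_square
      algebra_simps)

lemma standard_row_descartes:
  assumes "v \<in> standard_rows"
  shows "(v$3)\<^sup>2 + (v$4)\<^sup>2 - v$1 * v$2 = 1"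
proof -
  obtain U i where U: "U \<in> super_apollonian_group" and v: "v = (U ** W_D1) $ i"
    using assms unfolding standard_rows_def by blast
  have "(U ** W_D1) ** curvature_center_form ** transpose (U ** W_D1)
      = U ** (W_D1 ** curvature_center_form ** transpose W_D1) ** transpose U"
    by (simp add: matrix_transpose_mul matrix_mul_assoc)
  also have "\<dots> = descartes_form"
    by (simp add: augmented_descartes_W_D1 super_apollonian_group_preserves_descartes_form U)
  finally show ?thesis
    using curvature_center_form_diagonal[of "U ** W_D1" i] by (simp add: v descartes_form_def)
qed

lemma standard_line_horizontal:
  assumes "v \<in> standard_rows" and "v$2 = 0"
  shows "v$3 = 0 \<and> (v$4)\<^sup>2 = 1"
proof -
  have "v$3/2 \<in> \<int>"
    using standard_row_parity[OF assms(1)] not_half_Ints_both[of "v$2"] assms(2) by auto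
  then obtain k where k: "v$3 = 2 * of_int k"
    by (metis Ints_cases times_divide_eq_right nonzero_mult_div_cancel_left zero_neq_numeral)
  have sq: "(v$3)\<^sup>2 + (v$4)\<^sup>2 = 1"
    using standard_row_descartes[OF assms(1)] assms(2) by simp
  then have "\<bar>v$3\<bar> \<le> 1"
    by (metis abs_square_le_1 le_add_same_cancel1 zero_le_power2)
  then have "k = 0"
    unfolding k by linarith
  then show ?thesis
    using sq k by simp
qed

lemma standard_unit_circle_center:
  assumes "v \<in> standard_rows" and "(v$2)\<^sup>2 = 1"
  shows "(v$3/v$2 - 1)/2 \<in> \<int> \<and> (v$4/v$2)/2 \<in> \<int>"
proof -
  have v2: "v$2 = 1 \<or> v$2 = -1"
    using assms(2) by (simp add: power2_eq_1_iff)
  then have "(v$2 - 1)/2 \<in> \<int>"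
    by auto
  then have par: "(v$3 - 1)/2 \<in> \<int>" "v$4/2 \<in> \<int>"
    using standard_row_parity[OF assms(1)] not_half_Ints_both[of "v$2"] by auto
  have "(v$3/v$2 - 1)/2 \<in> \<int>"
    using v2
  proof
    assume "v$2 = -1"
    then have "(v$3/v$2 - 1)/2 = - ((v$3 - 1)/2) - 1"
      by (simp add: field_simps)
    then show ?thesis
      using par(1) by (simp only:) (blast intro: Ints_diff Ints_minus Ints_1)
  qed (use par(1) in simp)
  moreover have "(v$4/v$2)/2 \<in> \<int>"
    using v2 par(2) by auto
  ultimately show ?thesis ..
qed

section \<open>Circles and axis-parallel motions\<close>

lemma pt_nth [simp]: "pt x y $ 1 = x" "pt x y $ 2 = y"
  by (simp_all add: pt_def)

lemma pt_eta: "pt (p$1) (p$2) = p"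
  unfolding pt_def vec_eq_iff using exhaust_2 by auto

lemma dist_vec2: "dist (p::real^2) q = sqrt ((p$1 - q$1)\<^sup>2 + (p$2 - q$2)\<^sup>2)"
  by (simp add: dist_vec_def L2_set_def sum_2 dist_real_def)

lemma mem_circle_of_row:
  "q \<in> circle_of_row v \<longleftrightarrow>
     (if v$2 \<noteq> 0 then (v$3/v$2 - q$1)\<^sup>2 + (v$4/v$2 - q$2)\<^sup>2 = (1/v$2)\<^sup>2
      else q$1 * v$3 + q$2 * v$4 = v$1/2)"
proof (cases "v$2 = 0")
  case False
  have "1/\<bar>v$2\<bar> = sqrt ((1/v$2)\<^sup>2)"
    by (simp add: real_sqrt_abs)
  then have "q \<in> circle_of_row v \<longleftrightarrow>
      sqrt ((v$3/v$2 - q$1)\<^sup>2 + (v$4/v$2 - q$2)\<^sup>2) = sqrt ((1/v$2)\<^sup>2)"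
    using False by (simp add: circle_of_row_def dist_vec2)
  then show ?thesis
    using False by (simp only: real_sqrt_eq_iff) simp
qed (simp add: circle_of_row_def)

lemma circle_of_row_diameter:
  assumes "v$2 \<noteq> 0" and "p \<in> circle_of_row v" and "q \<in> circle_of_row v"
  shows "dist p q \<le> 2 / \<bar>v$2\<bar>"
proof -
  define c :: "real^2" where "c = (\<chi> k. if k = 1 then v$3 / v$2 else v$4 / v$2)"
  have "dist c p = 1 / \<bar>v$2\<bar>" "dist c q = 1 / \<bar>v$2\<bar>"
    using assms unfolding circle_of_row_def c_def by simp_all
  then show ?thesis
    using dist_triangle2[of p q c] by (simp add: dist_commute)
qed

lemma standard_circle_diameter:
  assumes "v \<in> standard_rows" and "v$2 \<noteq> 0" and "p \<in> circle_of_row v" and "q \<in> circle_of_row v"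
  shows "dist p q \<le> 2"
proof -
  obtain k where k: "v$2 = of_int k"
    using standard_row_integral[OF assms(1)] by (auto elim: Ints_cases)
  with assms(2) have "1 \<le> \<bar>k\<bar>"
    by auto
  then have "1 \<le> \<bar>v$2\<bar>"
    unfolding k by linarith
  then have "2 / \<bar>v$2\<bar> \<le> 2"
    by (simp add: divide_le_eq)
  then show ?thesis
    using circle_of_row_diameter[OF assms(2-4)] by linarith
qed

definition axis_motion :: "real \<Rightarrow> real \<Rightarrow> real \<Rightarrow> real \<Rightarrow> real^2 \<Rightarrow> real^2" where
  "axis_motion s1 s2 t1 t2 p = pt (s1 * p$1 + t1) (s2 * p$2 + t2)"

lemma axis_motion_comp:
  "axis_motion s1 s2 t1 t2 \<circ> axis_motion u1 u2 r1 r2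
     = axis_motion (s1 * u1) (s2 * u2) (s1 * r1 + t1) (s2 * r2 + t2)"
  by (simp add: fun_eq_iff axis_motion_def algebra_simps)

lemma axis_motion_id: "axis_motion 1 1 0 0 = id"
  by (simp add: fun_eq_iff axis_motion_def pt_eta)

lemma axis_motion_inverse:
  assumes "s1 \<in> {-1, 1}" and "s2 \<in> {-1, 1}"
  shows "axis_motion s1 s2 (- s1 * t1) (- s2 * t2) \<circ> axis_motion s1 s2 t1 t2 = id"
    and "axis_motion s1 s2 t1 t2 \<circ> axis_motion s1 s2 (- s1 * t1) (- s2 * t2) = id"
  using assms by (auto simp: axis_motion_comp axis_motion_id)

lemma inv_axis_motion:
  assumes "s1 \<in> {-1, 1}" and "s2 \<in> {-1, 1}"
  shows "inv (axis_motion s1 s2 t1 t2) = axis_motion s1 s2 (- s1 * t1) (- s2 * t2)"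
  using axis_motion_inverse[OF assms] by (rule inv_unique_comp[rotated])

lemma bij_axis_motion:
  assumes "s1 \<in> {-1, 1}" and "s2 \<in> {-1, 1}"
  shows "bij (axis_motion s1 s2 t1 t2)"
  using axis_motion_inverse[OF assms] by (rule o_bij)

lemma euclidean_motion_axis_motion:
  assumes "s1 \<in> {-1, 1}" and "s2 \<in> {-1, 1}"
  shows "euclidean_motion (axis_motion s1 s2 t1 t2)"
proof -
  have "(s * a + t - (s * b + t))\<^sup>2 = (a - b)\<^sup>2" if "s \<in> {-1, 1}" for s a b t :: real
    using that by (auto simp: power2_commute)
  then show ?thesis
    using assms by (simp add: euclidean_motion_def axis_motion_def dist_vec2)
qed

definition axis_motion_matrix :: "real \<Rightarrow> real \<Rightarrow> real \<Rightarrow> real \<Rightarrow> real^4^4" where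
  "axis_motion_matrix s1 s2 t1 t2 =
     (\<chi> i. if i = 1 then mkrow 1 0 0 0 else if i = 2 then mkrow (t1\<^sup>2 + t2\<^sup>2) 1 t1 t2
           else if i = 3 then mkrow (2 * s1 * t1) 0 s1 0 else mkrow (2 * s2 * t2) 0 0 s2)"

lemma vector_matrix_mult_axis_motion_matrix:
  "v v* axis_motion_matrix s1 s2 t1 t2
     = mkrow (v$1 + (t1\<^sup>2 + t2\<^sup>2) * v$2 + 2 * s1 * t1 * v$3 + 2 * s2 * t2 * v$4)
         (v$2) (s1 * v$3 + t1 * v$2) (s2 * v$4 + t2 * v$2)"
  by (simp add: vec_eq_iff forall_4 vector_matrix_mult_def sum_4 axis_motion_matrix_def algebra_simps)

lemma image_axis_motion_circle_of_row:
  assumes s1: "s1 \<in> {-1, 1}" and s2: "s2 \<in> {-1, 1}"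
  shows "axis_motion s1 s2 t1 t2 ` circle_of_row v = circle_of_row (v v* axis_motion_matrix s1 s2 t1 t2)"
proof -
  have "axis_motion s1 s2 t1 t2 ` circle_of_row v = inv (axis_motion s1 s2 t1 t2) -` circle_of_row v"
    by (metis bij_axis_motion[OF assms] bij_imp_bij_inv bij_vimage_eq_inv_image inv_inv_eq)
  also have "\<dots> = circle_of_row (v v* axis_motion_matrix s1 s2 t1 t2)"
  proof (rule set_eqI)
    fix q
    have flip: "(s * a + t * b) / b - x = s * (a / b - (s * x - s * t))"
      if "s \<in> {-1, 1}" "b \<noteq> 0" for s a b t x :: real
      using that by (auto simp: field_simps)
    show "q \<in> inv (axis_motion s1 s2 t1 t2) -` circle_of_row v
        \<longleftrightarrow> q \<in> circle_of_row (v v* axis_motion_matrix s1 s2 t1 t2)"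
    proof (cases "v$2 = 0")
      case True
      then show ?thesis
        by (simp add: inv_axis_motion[OF assms] axis_motion_def mem_circle_of_row
            vector_matrix_mult_axis_motion_matrix field_simps)
    next
      case False
      have "s1\<^sup>2 = 1" "s2\<^sup>2 = 1"
        using s1 s2 by auto
      with False show ?thesis
        by (simp add: inv_axis_motion[OF assms] axis_motion_def mem_circle_of_row
            vector_matrix_mult_axis_motion_matrix flip[OF s1] flip[OF s2] power_mult_distrib)
    qed
  qed
  finally show ?thesis .
qed

lemma matrix_mult_row: "(X ** G) $ i = X $ i v* G"
  by (simp add: vec_eq_iff matrix_matrix_mult_def vector_matrix_mult_def mult.commute)

lemma leaves_invariant_geometric_super_packing:
  assumes img: "\<And>v. g ` circle_of_row v = circle_of_row (v v* G)"
    and WG: "W ** G = perm_matrix p ** V ** W"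
    and V: "V \<in> super_apollonian_group" "V ** V = mat 1"
    and p: "\<And>x. p (p x) = x"
  shows "leaves_invariant g (geometric_super_packing W)"
proof -
  have image_row: "g ` circle_of_row ((U ** W) $ i) = circle_of_row ((permute_matrix p U ** V ** W) $ p i)"
    for U i
  proof -
    have "(U ** W) ** G = (U ** perm_matrix p) ** V ** W"
      by (simp add: WG flip: matrix_mul_assoc)
    also have "\<dots> = perm_matrix p ** (permute_matrix p U ** V ** W)"
      by (simp add: matrix_mul_perm_matrix p matrix_mul_assoc)
    finally show ?thesis
      by (simp add: img matrix_mult_row[symmetric] perm_matrix_row)
  qed
  have "(\<lambda>C. g ` C) ` geometric_super_packing W \<subseteq> geometric_super_packing W"
  proof
    fix C assume "C \<in> (\<lambda>C. g ` C) ` geometric_super_packing W"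
    then obtain U i where U: "U \<in> super_apollonian_group" and C: "C = g ` circle_of_row ((U ** W) $ i)"
      unfolding geometric_super_packing_def by blast
    have "permute_matrix p U ** V \<in> super_apollonian_group"
      using super_apollonian_group_mult[OF super_apollonian_group_permute[OF p U] V(1)] .
    then show "C \<in> geometric_super_packing W"
      unfolding C image_row geometric_super_packing_def by blast
  qed
  moreover have "geometric_super_packing W \<subseteq> (\<lambda>C. g ` C) ` geometric_super_packing W"
  proof
    fix C assume "C \<in> geometric_super_packing W"
    then obtain U i where U: "U \<in> super_apollonian_group" and C: "C = circle_of_row ((U ** W) $ i)"
      unfolding geometric_super_packing_def by blast
    define U' where "U' = permute_matrix p (U ** V)"
    have "U' \<in> super_apollonian_group"
      unfolding U'_def using super_apollonian_group_mult[OF U V(1)] by (rule super_apollonian_group_permute[OF p])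
    moreover have "permute_matrix p U' ** V = U"
      by (simp add: U'_def permute_matrix_involution p V(2) flip: matrix_mul_assoc)
    then have "g ` circle_of_row ((U' ** W) $ p i) = C"
      by (simp add: image_row C p)
    ultimately show "C \<in> (\<lambda>C. g ` C) ` geometric_super_packing W"
      unfolding geometric_super_packing_def by blast
  qed
  ultimately show ?thesis
    unfolding leaves_invariant_def by blast
qed

lemma motion_gens_axis_motion:
  "transl_x = axis_motion 1 1 2 0" "transl_y = axis_motion 1 1 0 2"
  "refl_x = axis_motion (-1) 1 0 0" "refl_y = axis_motion 1 (-1) 0 0"
  by (simp_all add: fun_eq_iff axis_motion_def transl_x_def transl_y_def refl_x_def refl_y_def)

lemma W_D1_axis_motion_matrix:
  "W_D1 ** axis_motion_matrix 1 1 2 0 = perm_matrix (id(3 := 4, 4 := 3)) ** S_gen 4 ** W_D1"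
  "W_D1 ** axis_motion_matrix 1 1 0 2 = perm_matrix (id(1 := 2, 2 := 1)) ** S_gen_perp 1 ** W_D1"
  "W_D1 ** axis_motion_matrix (-1) 1 0 0 = perm_matrix (id(3 := 4, 4 := 3)) ** mat 1 ** W_D1"
  "W_D1 ** axis_motion_matrix 1 (-1) 0 0 = perm_matrix (id(1 := 2, 2 := 1)) ** mat 1 ** W_D1"
  by (simp_all add: vec_eq_iff forall_4 perm_matrix_row flip: matrix_mul_assoc,
      simp_all add: W_D1_def axis_motion_matrix_def S_gen_perp_def S_gen_def transpose_def
      matrix_matrix_mult_def sum_4)

lemma leaves_invariant_motion_gens:
  assumes "g \<in> motion_gens"
  shows "leaves_invariant g standard_super_packing"
proof -
  have axis: "leaves_invariant (axis_motion s1 s2 t1 t2) standard_super_packing"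
    if "s1 \<in> {-1, 1}" "s2 \<in> {-1, 1}" "V \<in> super_apollonian_group" "V ** V = mat 1"
      and "W_D1 ** axis_motion_matrix s1 s2 t1 t2 = perm_matrix (id(a := b, b := a)) ** V ** W_D1"
    for s1 s2 t1 t2 V and a b :: 4
    unfolding standard_super_packing_def
    by (rule leaves_invariant_geometric_super_packing[OF image_axis_motion_circle_of_row[OF that(1,2)]
          that(5,3,4)]) simp
  note identity = super_apollonian_group.id matrix_mul_lid
  show ?thesis
    using assms unfolding motion_gens_def motion_gens_axis_motion
    using axis[OF _ _ S_gen_in_super_apollonian_group S_gen_involution W_D1_axis_motion_matrix(1)]
      axis[OF _ _ S_gen_perp_in_super_apollonian_group S_gen_perp_involution W_D1_axis_motion_matrix(2)]
      axis[OF _ _ identity W_D1_axis_motion_matrix(3)] axis[OF _ _ identity W_D1_axis_motion_matrix(4)]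
    by auto
qed

section \<open>The motion group\<close>

lemma leaves_invariant_comp:
  assumes "leaves_invariant g P" and "leaves_invariant f P"
  shows "leaves_invariant (g \<circ> f) P"
proof -
  have "(\<lambda>C. (g \<circ> f) ` C) ` P = (\<lambda>C. g ` C) ` ((\<lambda>C. f ` C) ` P)"
    by (simp add: image_image image_comp)
  also have "\<dots> = P"
    using assms unfolding leaves_invariant_def by (simp only:)
  finally show ?thesis
    unfolding leaves_invariant_def .
qed

lemma leaves_invariant_inv:
  assumes "inj f" and "leaves_invariant f P"
  shows "leaves_invariant (inv f) P"
proof -
  have "(\<lambda>C. inv f ` C) ` P = (\<lambda>C. inv f ` C) ` ((\<lambda>C. f ` C) ` P)"
    using assms(2) unfolding leaves_invariant_def by simp
  also have "\<dots> = P"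
    using assms(1) by (simp add: image_image)
  finally show ?thesis
    unfolding leaves_invariant_def .
qed

lemma euclidean_motion_comp:
  "euclidean_motion g \<Longrightarrow> euclidean_motion f \<Longrightarrow> euclidean_motion (g \<circ> f)"
  unfolding euclidean_motion_def by simp

lemma euclidean_motion_inv:
  assumes "surj f" and "euclidean_motion f"
  shows "euclidean_motion (inv f)"
  using assms unfolding euclidean_motion_def by (metis surj_f_inv_f)

lemma motion_gens_are_axis_motions:
  assumes "g \<in> motion_gens"
  obtains s1 s2 t1 t2 where "s1 \<in> {-1, 1}" "s2 \<in> {-1, 1}" "g = axis_motion s1 s2 t1 t2"
  using assms unfolding motion_gens_def motion_gens_axis_motion by auto

lemma motion_group_invariant:
  assumes "f \<in> motion_group"
  shows "euclidean_motion f \<and> leaves_invariant f standard_super_packing"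
  using assms
proof induct
  case id
  then show ?case
    by (simp add: euclidean_motion_def leaves_invariant_def)
next
  case (gen f g)
  obtain s1 s2 t1 t2 where "s1 \<in> {-1, 1}" "s2 \<in> {-1, 1}" and "g = axis_motion s1 s2 t1 t2"
    using gen(3) by (rule motion_gens_are_axis_motions)
  then have "euclidean_motion g"
    by (simp add: euclidean_motion_axis_motion)
  then show ?case
    using gen(2,3) euclidean_motion_comp leaves_invariant_comp leaves_invariant_motion_gens by blast
next
  case (geninv f g)
  obtain s1 s2 t1 t2 where s: "s1 \<in> {-1, 1}" "s2 \<in> {-1, 1}" and g: "g = axis_motion s1 s2 t1 t2"
    using geninv(3) by (rule motion_gens_are_axis_motions)
  have "euclidean_motion (inv g)" "leaves_invariant (inv g) standard_super_packing"
    using geninv(3) bij_axis_motion[OF s] euclidean_motion_axis_motion[OF s]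
    by (auto simp: g bij_def intro: euclidean_motion_inv leaves_invariant_inv leaves_invariant_motion_gens)
  then show ?case
    using geninv(2) euclidean_motion_comp leaves_invariant_comp by blast
qed

lemma motion_group_iterate:
  fixes h :: "int \<Rightarrow> real^2 \<Rightarrow> real^2"
  assumes "g \<in> motion_gens" and "f \<in> motion_group" and "h 0 = id"
    and "\<And>k. h (k + 1) = g \<circ> h k" and "\<And>k. h (k - 1) = inv g \<circ> h k"
  shows "h k \<circ> f \<in> motion_group"
proof (induct k rule: int_induct[where k = 0])
  case base
  show ?case
    using assms(2,3) by simp
next
  case (step1 k)
  show ?case
    unfolding assms(4) comp_assoc by (rule motion_group.gen[OF step1(2) assms(1)])
next
  case (step2 k)
  show ?case
    unfolding assms(5) comp_assoc by (rule motion_group.geninv[OF step2(2) assms(1)])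
qed

lemma axis_motion_in_motion_group:
  assumes s: "s1 \<in> {-1, 1}" "s2 \<in> {-1, 1}" and ab: "a \<in> \<int>" "b \<in> \<int>"
  shows "axis_motion s1 s2 (2 * a) (2 * b) \<in> motion_group"
proof -
  have gens: "transl_x \<in> motion_gens" "transl_y \<in> motion_gens" "refl_x \<in> motion_gens" "refl_y \<in> motion_gens"
    by (simp_all add: motion_gens_def)
  have refl: "axis_motion s1 s2 0 0 \<in> motion_group"
  proof -
    have "refl_x \<in> motion_group" and refl_y: "refl_y \<in> motion_group"
      using motion_group.gen[OF motion_group.id gens(3)] motion_group.gen[OF motion_group.id gens(4)]
      by simp_all
    moreover have "refl_x \<circ> refl_y \<in> motion_group"
      using motion_group.gen[OF refl_y gens(3)] .
    moreover have "axis_motion s1 s2 0 0 \<in> {id, refl_x, refl_y, refl_x \<circ> refl_y}"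
      using s by (auto simp: motion_gens_axis_motion axis_motion_comp simp flip: axis_motion_id)
    ultimately show ?thesis
      using motion_group.id by auto
  qed
  have transl_x_iter: "axis_motion 1 1 (2 * of_int k) 0 \<circ> f \<in> motion_group" if "f \<in> motion_group" for k f
  proof (rule motion_group_iterate[OF gens(1) that])
    show "axis_motion 1 1 (2 * of_int 0) 0 = id"
      by (simp add: axis_motion_id)
    show "axis_motion 1 1 (2 * of_int (k + 1)) 0 = transl_x \<circ> axis_motion 1 1 (2 * of_int k) 0" for k
      by (simp add: motion_gens_axis_motion axis_motion_comp)
    show "axis_motion 1 1 (2 * of_int (k - 1)) 0 = inv transl_x \<circ> axis_motion 1 1 (2 * of_int k) 0" for k
      by (simp add: motion_gens_axis_motion inv_axis_motion axis_motion_comp)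
  qed
  have transl_y_iter: "axis_motion 1 1 0 (2 * of_int k) \<circ> f \<in> motion_group" if "f \<in> motion_group" for k f
  proof (rule motion_group_iterate[OF gens(2) that])
    show "axis_motion 1 1 0 (2 * of_int 0) = id"
      by (simp add: axis_motion_id)
    show "axis_motion 1 1 0 (2 * of_int (k + 1)) = transl_y \<circ> axis_motion 1 1 0 (2 * of_int k)" for k
      by (simp add: motion_gens_axis_motion axis_motion_comp)
    show "axis_motion 1 1 0 (2 * of_int (k - 1)) = inv transl_y \<circ> axis_motion 1 1 0 (2 * of_int k)" for k
      by (simp add: motion_gens_axis_motion inv_axis_motion axis_motion_comp)
  qed
  obtain m n where "a = of_int m" "b = of_int n"
    using ab by (auto elim!: Ints_cases)
  then have "axis_motion s1 s2 (2 * a) (2 * b)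
      = axis_motion 1 1 (2 * of_int m) 0 \<circ> (axis_motion 1 1 0 (2 * of_int n) \<circ> axis_motion s1 s2 0 0)"
    by (simp add: axis_motion_comp)
  then show ?thesis
    using transl_x_iter[OF transl_y_iter[OF refl]] by simp
qed

section \<open>Euclidean motions leaving the packing invariant\<close>

lemma euclidean_motion_affine:
  assumes "euclidean_motion f"
  obtains \<alpha> \<beta> \<gamma> \<delta> c1 c2
  where "\<And>p. f p = pt (\<alpha> * p$1 + \<beta> * p$2 + c1) (\<gamma> * p$1 + \<delta> * p$2 + c2)"
    and "\<alpha>\<^sup>2 + \<gamma>\<^sup>2 = 1" and "\<beta>\<^sup>2 + \<delta>\<^sup>2 = 1" and "\<alpha> * \<beta> + \<gamma> * \<delta> = 0"
proof -
  define L where "L p = f p - f 0" for p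
  have "\<forall>x y. dist (L x) (L y) = dist x y"
  proof (intro allI)
    fix x y
    have "(f x - f 0) - (f y - f 0) = f x - f y"
      by simp
    then show "dist (L x) (L y) = dist x y"
      using assms unfolding euclidean_motion_def L_def dist_norm by simp
  qed
  then have lin: "linear L"
    by (rule isometry_linear[rotated]) (simp add: L_def)
  have dec: "p = p$1 *\<^sub>R pt 1 0 + p$2 *\<^sub>R pt 0 1" for p :: "real^2"
    unfolding vec_eq_iff forall_2 by (simp add: pt_def)
  have L: "L p = p$1 *\<^sub>R L (pt 1 0) + p$2 *\<^sub>R L (pt 0 1)" for p
    by (subst dec) (simp add: linear_add[OF lin] linear_scale[OF lin])
  define \<alpha> \<gamma> \<beta> \<delta>
    where "\<alpha> = L (pt 1 0) $ 1" "\<gamma> = L (pt 1 0) $ 2" "\<beta> = L (pt 0 1) $ 1" "\<delta> = L (pt 0 1) $ 2"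
  define c1 c2 where "c1 = f 0 $ 1" "c2 = f 0 $ 2"
  have f: "f p = pt (\<alpha> * p$1 + \<beta> * p$2 + c1) (\<gamma> * p$1 + \<delta> * p$2 + c2)" for p
  proof -
    have "f p = f 0 + (p$1 *\<^sub>R L (pt 1 0) + p$2 *\<^sub>R L (pt 0 1))"
      using L[of p] unfolding L_def[of p] by (simp add: algebra_simps)
    then show ?thesis
      unfolding vec_eq_iff forall_2 by (simp add: \<alpha>_\<gamma>_\<beta>_\<delta>_def c1_c2_def algebra_simps)
  qed
  have "dist (f (pt 1 0)) (f (pt 0 0)) = 1" "dist (f (pt 0 1)) (f (pt 0 0)) = 1"
    "dist (f (pt 1 0)) (f (pt 0 1)) = sqrt 2"
    using assms unfolding euclidean_motion_def by (simp_all add: dist_vec2)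
  then have "sqrt (\<alpha>\<^sup>2 + \<gamma>\<^sup>2) = sqrt 1" "sqrt (\<beta>\<^sup>2 + \<delta>\<^sup>2) = sqrt 1"
    "sqrt ((\<alpha> - \<beta>)\<^sup>2 + (\<gamma> - \<delta>)\<^sup>2) = sqrt 2"
    by (simp_all add: f dist_vec2)
  then have "\<alpha>\<^sup>2 + \<gamma>\<^sup>2 = 1" "\<beta>\<^sup>2 + \<delta>\<^sup>2 = 1" "(\<alpha> - \<beta>)\<^sup>2 + (\<gamma> - \<delta>)\<^sup>2 = 2"
    by (simp_all only: real_sqrt_eq_iff)
  moreover from this have "\<alpha> * \<beta> + \<gamma> * \<delta> = 0"
    by (simp add: power2_eq_square algebra_simps)
  ultimately show thesis
    using f that by blast
qed

lemma W_D1_row_standard: "W_D1 $ i \<in> standard_rows"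
proof -
  have "W_D1 $ i = (mat 1 ** W_D1) $ i"
    by simp
  then show ?thesis
    unfolding standard_rows_def using super_apollonian_group.id by blast
qed

lemma image_in_standard_super_packing:
  assumes "leaves_invariant f standard_super_packing"
  obtains v where "v \<in> standard_rows" and "f ` circle_of_row (W_D1 $ i) = circle_of_row v"
proof -
  have "circle_of_row (W_D1 $ i) \<in> standard_super_packing"
    by (simp add: standard_super_packing_eq W_D1_row_standard)
  then have "f ` circle_of_row (W_D1 $ i) \<in> circle_of_row ` standard_rows"
    using assms unfolding leaves_invariant_def standard_super_packing_eq by blast
  then show thesis
    using that by blast
qed

lemma invariant_motion_is_axis_motion:
  assumes motion: "euclidean_motion f" and inv: "leaves_invariant f standard_super_packing"
  obtains s1 s2 t1 t2 where "s1 \<in> {-1, 1}" and "s2 \<in> {-1, 1}" and "f = axis_motion s1 s2 t1 t2"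
proof -
  obtain \<alpha> \<beta> \<gamma> \<delta> c1 c2 where f: "\<And>p. f p = pt (\<alpha> * p$1 + \<beta> * p$2 + c1) (\<gamma> * p$1 + \<delta> * p$2 + c2)"
    and orth: "\<alpha>\<^sup>2 + \<gamma>\<^sup>2 = 1" "\<beta>\<^sup>2 + \<delta>\<^sup>2 = 1" "\<alpha> * \<beta> + \<gamma> * \<delta> = 0"
    using euclidean_motion_affine[OF motion] by metis
  obtain r where r: "r \<in> standard_rows" and image: "f ` circle_of_row (W_D1 $ 1) = circle_of_row r"
    using inv by (rule image_in_standard_super_packing)
  have on_line: "f (pt x 1) \<in> circle_of_row r" for x
    using image by (auto simp: mem_circle_of_row W_D1_def)
  have "r$2 = 0"
  proof (rule ccontr)
    assume "r$2 \<noteq> 0"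
    then have "dist (f (pt 0 1)) (f (pt 3 1)) \<le> 2"
      using standard_circle_diameter[OF r] on_line by blast
    moreover have "dist (f (pt 0 1)) (f (pt 3 1)) = 3"
      using motion by (simp add: euclidean_motion_def dist_vec2)
    ultimately show False
      by simp
  qed
  then have horizontal: "r$3 = 0" "(r$4)\<^sup>2 = 1"
    using standard_line_horizontal[OF r] by auto
  have "(f (pt x 1))$2 * r$4 = r$1/2" for x
    using on_line[of x] \<open>r$2 = 0\<close> horizontal by (simp add: mem_circle_of_row)
  from this[of 0] this[of 1] have "(\<delta> + c2) * r$4 = r$1/2" "(\<gamma> + \<delta> + c2) * r$4 = r$1/2"
    by (simp_all add: f)
  moreover have "\<gamma> * r$4 = (\<gamma> + \<delta> + c2) * r$4 - (\<delta> + c2) * r$4"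
    by (simp add: algebra_simps)
  ultimately have "\<gamma> * r$4 = 0"
    by linarith
  then have "\<gamma> = 0"
    using horizontal by auto
  then have "\<beta> = 0" "\<alpha> \<in> {-1, 1}" "\<delta> \<in> {-1, 1}"
    using orth by (auto simp: power2_eq_1_iff)
  moreover have "f = axis_motion \<alpha> \<delta> c1 c2"
    using \<open>\<gamma> = 0\<close> \<open>\<beta> = 0\<close> by (simp add: fun_eq_iff f axis_motion_def)
  ultimately show thesis
    using that by blast
qed

lemma circle_of_row_unit_circle:
  assumes "v$2 \<noteq> 0" and a: "a \<in> {-1, 1}" and b: "b \<in> {-1, 1}"
    and "pt (x - a) y \<in> circle_of_row v" "pt (x + a) y \<in> circle_of_row v"
    and "pt x (y + b) \<in> circle_of_row v" "pt x (y - b) \<in> circle_of_row v"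
  shows "v$3/v$2 = x \<and> v$4/v$2 = y \<and> (v$2)\<^sup>2 = 1"
proof -
  define X Y where "X = v$3/v$2" and "Y = v$4/v$2"
  have E: "(X - (x - a))\<^sup>2 + (Y - y)\<^sup>2 = (1/v$2)\<^sup>2" "(X - (x + a))\<^sup>2 + (Y - y)\<^sup>2 = (1/v$2)\<^sup>2"
    "(X - x)\<^sup>2 + (Y - (y + b))\<^sup>2 = (1/v$2)\<^sup>2" "(X - x)\<^sup>2 + (Y - (y - b))\<^sup>2 = (1/v$2)\<^sup>2"
    using assms unfolding mem_circle_of_row X_def Y_def by simp_all
  have "(X - (x - a))\<^sup>2 - (X - (x + a))\<^sup>2 = 4 * a * (X - x)"
    "(Y - (y + b))\<^sup>2 - (Y - (y - b))\<^sup>2 = - 4 * b * (Y - y)"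
    by (simp_all add: power2_eq_square algebra_simps)
  then have "X = x" "Y = y"
    using E a b by auto
  moreover from this have "(v$2)\<^sup>2 = 1"
    using E(1) a by (auto simp: power_divide)
  ultimately show ?thesis
    unfolding X_def Y_def by blast
qed

lemma invariant_axis_motion_even_translation:
  assumes s: "s1 \<in> {-1, 1}" "s2 \<in> {-1, 1}"
    and inv: "leaves_invariant (axis_motion s1 s2 t1 t2) standard_super_packing"
  shows "t1/2 \<in> \<int> \<and> t2/2 \<in> \<int>"
proof -
  obtain v where v: "v \<in> standard_rows"
    and image: "axis_motion s1 s2 t1 t2 ` circle_of_row (W_D1 $ 3) = circle_of_row v"
    using inv by (rule image_in_standard_super_packing)
  have "axis_motion s1 s2 t1 t2 q \<in> circle_of_row v" if "q \<in> circle_of_row (W_D1 $ 3)" for q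
    using image that by blast
  moreover have "pt 0 0 \<in> circle_of_row (W_D1 $ 3)" "pt 2 0 \<in> circle_of_row (W_D1 $ 3)"
    "pt 1 1 \<in> circle_of_row (W_D1 $ 3)" "pt 1 (-1) \<in> circle_of_row (W_D1 $ 3)"
    by (simp_all add: mem_circle_of_row W_D1_def)
  moreover have "axis_motion s1 s2 t1 t2 (pt 0 0) = pt (s1 + t1 - s1) t2"
    "axis_motion s1 s2 t1 t2 (pt 2 0) = pt (s1 + t1 + s1) t2"
    "axis_motion s1 s2 t1 t2 (pt 1 1) = pt (s1 + t1) (t2 + s2)"
    "axis_motion s1 s2 t1 t2 (pt 1 (-1)) = pt (s1 + t1) (t2 - s2)"
    by (simp_all add: axis_motion_def algebra_simps)
  ultimately have points: "pt (s1 + t1 - s1) t2 \<in> circle_of_row v" "pt (s1 + t1 + s1) t2 \<in> circle_of_row v"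
    "pt (s1 + t1) (t2 + s2) \<in> circle_of_row v" "pt (s1 + t1) (t2 - s2) \<in> circle_of_row v"
    by metis+
  have "v$2 \<noteq> 0"
  proof
    assume "v$2 = 0"
    then have "v$4 \<noteq> 0" "(t2 + s2) * v$4 = v$1/2" "(t2 - s2) * v$4 = v$1/2"
      using points(3,4) standard_line_horizontal[OF v] by (auto simp: mem_circle_of_row)
    moreover have "2 * s2 * v$4 = (t2 + s2) * v$4 - (t2 - s2) * v$4"
      by (simp add: algebra_simps)
    ultimately show False
      using s(2) by auto
  qed
  then have "v$3/v$2 = s1 + t1" "v$4/v$2 = t2" "(v$2)\<^sup>2 = 1"
    using circle_of_row_unit_circle[OF _ s points] by auto
  then have "(s1 + t1 - 1)/2 \<in> \<int>" "t2/2 \<in> \<int>"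
    using standard_unit_circle_center[OF v] by auto
  moreover have "t1/2 = (s1 + t1 - 1)/2 \<or> t1/2 = (s1 + t1 - 1)/2 + 1"
    using s(1) by (auto simp: field_simps)
  ultimately show ?thesis
    by (metis Ints_1 Ints_add)
qed

theorem theorem6p1:
  shows "(\<forall>g\<in>motion_gens. leaves_invariant g standard_super_packing)
       \<and> {f. euclidean_motion f \<and> leaves_invariant f standard_super_packing} = motion_group"
proof
  show "\<forall>g\<in>motion_gens. leaves_invariant g standard_super_packing"
    using leaves_invariant_motion_gens by blast
  show "{f. euclidean_motion f \<and> leaves_invariant f standard_super_packing} = motion_group"
  proof (intro set_eqI iffI)
    fix f
    assume "f \<in> {f. euclidean_motion f \<and> leaves_invariant f standard_super_packing}"
    then have motion: "euclidean_motion f" and inv: "leaves_invariant f standard_super_packing"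
      by auto
    obtain s1 s2 t1 t2 where s: "s1 \<in> {-1, 1}" "s2 \<in> {-1, 1}" and f: "f = axis_motion s1 s2 t1 t2"
      using motion inv by (rule invariant_motion_is_axis_motion)
    have "t1/2 \<in> \<int>" "t2/2 \<in> \<int>"
      using invariant_axis_motion_even_translation[OF s] inv by (simp_all add: f)
    from axis_motion_in_motion_group[OF s this] show "f \<in> motion_group"
      by (simp add: f)
  next
    fix f
    assume "f \<in> motion_group"
    then show "f \<in> {f. euclidean_motion f \<and> leaves_invariant f standard_super_packing}"
      using motion_group_invariant by blast
  qed
qed

end
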